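(* In the setting described in the context (with $L=[0,1]$), let $q\in\{1,\dots,n\}$ and assume there exists $A\subseteq\mathcal C$ with $|A|=n-q$ and $\nu_q(A)=0$. Define $\mu_*:2^{\mathcal C}\to[0,1]$ by $\mu_*(\mathcal C)=1$, $\mu_*(X)=\nu_q(X)$ if $n-q\le|X|<n$, and $\mu_*(X)=\min_{Y\supsetneq X,\ n-q\le|Y|<n}\nu_q(Y)$ if $|X|<n-q$. Then $\mu_*$ is the lowest (pointwise) among all $q$-minitive capacities $\mu:2^{\mathcal C}\to[0,1]$ satisfying $\max_{1\le k\le N}|S_\mu(x^{(k)})-\alpha^{(k)}|=\nabla_q$.
   Context: Let $\mathcal C=\{1,\dots,n\}$ and $L=[0,1]$. A capacity is a map $\mu:2^{\mathcal C}\to[0,1]$ with $\mu(\emptyset)=0$, $\mu(\mathcal C)=1$, monotone for inclusion; it is $q$-minitive if for all $X$ with $|X|<n-q$, $\mu(X)=\min_{Y\supsetneq X,\ |Y|\ge n-q}\mu(Y)$. Sugeno integral: $S_\mu(x)=\max_{A\subseteq\mathcal C}\min(\min_{i\in A}x_i,\mu(A))$ with $\min_{i\in\emptyset}x_i=1$. Training data: $N$ pairs $(x^{(k)},\alpha^{(k)})$, $x^{(k)}\in[0,1]^n$, $\alpha^{(k)}\in[0,1]$. For $A\subsetneq\mathcal C$, $\gamma_{k,A}=\max_{i\in\mathcal C\setminus A}x^{(k)}_i$. Write $t^+=\max(t,0)$. For $1\le i\le N$ and $A\subsetneq\mathcal C$ with $|A|\ge n-q$, let $\sigma_\epsilon(\alpha^{(i)},\gamma_{l,A},\alpha^{(l)})=\min\big(\tfrac{(\alpha^{(l)}-\alpha^{(i)})^+}{2},(\alpha^{(l)}-\gamma_{l,A})^+\big)$,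 $\nabla_{i,A}=\max\big((\gamma_{i,A}-\alpha^{(i)})^+,\max_{1\le l\le N}\sigma_\epsilon(\alpha^{(i)},\gamma_{l,A},\alpha^{(l)})\big)$, $\nabla_i=\min_{A\subsetneq\mathcal C,\ |A|\ge n-q}\nabla_{i,A}$, and $\nabla_q=\max_{1\le i\le N}\nabla_i$. For $A\subsetneq\mathcal C$ with $|A|\ge n-q$, $\nu_q(A)=\max_{1\le k\le N}\big(\gamma_{k,A}\,\epsilon\,\max(\alpha^{(k)}-\nabla_q,0)\big)$, where $a\,\epsilon\,b=b$ if $a<b$ and $a\,\epsilon\,b=0$ if $a\ge b$. *)

theory Defs
  imports Complex_Main
begin

text \<open>Criteria set C = {1..n}; data indexed by k in {1..N}; x k i is the value of
  criterion i in the k-th training example, alpha k its target.\<close>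

definition crit :: "nat \<Rightarrow> nat set" where
  "crit n = {1..n}"

definition pos :: "real \<Rightarrow> real" where
  "pos t = max t 0"

definition gam :: "nat \<Rightarrow> (nat \<Rightarrow> nat \<Rightarrow> real) \<Rightarrow> nat \<Rightarrow> nat set \<Rightarrow> real" where
  "gam n x k A = Max ((\<lambda>i. x k i) ` (crit n - A))"

definition sig :: "real \<Rightarrow> real \<Rightarrow> real \<Rightarrow> real" where
  "sig ai g al = min (pos (al - ai) / 2) (pos (al - g))"

definition nablaIA :: "nat \<Rightarrow> nat \<Rightarrow> (nat \<Rightarrow> nat \<Rightarrow> real) \<Rightarrow> (nat \<Rightarrow> real) \<Rightarrow> nat \<Rightarrow> nat set \<Rightarrow> real" where
  "nablaIA n N x alpha i A =
     max (pos (gam n x i A - alpha i)) (Max ((\<lambda>l. sig (alpha i) (gam n x l A) (alpha l)) ` {1..N}))"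

definition nablaI :: "nat \<Rightarrow> nat \<Rightarrow> (nat \<Rightarrow> nat \<Rightarrow> real) \<Rightarrow> (nat \<Rightarrow> real) \<Rightarrow> nat \<Rightarrow> nat \<Rightarrow> real" where
  "nablaI n N x alpha q i =
     Min ((\<lambda>A. nablaIA n N x alpha i A) ` {A. A \<subset> crit n \<and> n - q \<le> card A})"

definition nablaQ :: "nat \<Rightarrow> nat \<Rightarrow> (nat \<Rightarrow> nat \<Rightarrow> real) \<Rightarrow> (nat \<Rightarrow> real) \<Rightarrow> nat \<Rightarrow> real" where
  "nablaQ n N x alpha q = Max ((\<lambda>i. nablaI n N x alpha q i) ` {1..N})"

definition eps :: "real \<Rightarrow> real \<Rightarrow> real" where
  "eps a b = (if a < b then b else 0)"

definition nuQ :: "nat \<Rightarrow> nat \<Rightarrow> (nat \<Rightarrow> nat \<Rightarrow> real) \<Rightarrow> (nat \<Rightarrow> real) \<Rightarrow> nat \<Rightarrow> nat set \<Rightarrow> real" where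
  "nuQ n N x alpha q A =
     Max ((\<lambda>k. eps (gam n x k A) (max (alpha k - nablaQ n N x alpha q) 0)) ` {1..N})"

text \<open>Capacity on 2^C with values in [0,1] (only values on subsets of C matter).\<close>
definition is_capacity :: "nat \<Rightarrow> (nat set \<Rightarrow> real) \<Rightarrow> bool" where
  "is_capacity n mu \<longleftrightarrow>
     (\<forall>X. X \<subseteq> crit n \<longrightarrow> 0 \<le> mu X \<and> mu X \<le> 1) \<and>
     mu {} = 0 \<and> mu (crit n) = 1 \<and>
     (\<forall>X Y. X \<subseteq> Y \<and> Y \<subseteq> crit n \<longrightarrow> mu X \<le> mu Y)"

definition q_minitive :: "nat \<Rightarrow> nat \<Rightarrow> (nat set \<Rightarrow> real) \<Rightarrow> bool" where
  "q_minitive n q mu \<longleftrightarrow>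
     (\<forall>X. X \<subseteq> crit n \<and> card X < n - q \<longrightarrow>
        mu X = Min (mu ` {Y. X \<subset> Y \<and> Y \<subseteq> crit n \<and> n - q \<le> card Y}))"

definition minOn :: "(nat \<Rightarrow> real) \<Rightarrow> nat set \<Rightarrow> real" where
  "minOn y A = (if A = {} then 1 else Min (y ` A))"

definition sugeno :: "nat \<Rightarrow> (nat set \<Rightarrow> real) \<Rightarrow> (nat \<Rightarrow> real) \<Rightarrow> real" where
  "sugeno n mu y = Max ((\<lambda>A. min (minOn y A) (mu A)) ` Pow (crit n))"

definition err :: "nat \<Rightarrow> nat \<Rightarrow> (nat \<Rightarrow> nat \<Rightarrow> real) \<Rightarrow> (nat \<Rightarrow> real) \<Rightarrow> (nat set \<Rightarrow> real) \<Rightarrow> real" where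
  "err n N x alpha mu = Max ((\<lambda>k. \<bar>sugeno n mu (x k) - alpha k\<bar>) ` {1..N})"

text \<open>The capacity mu_* of the corollary (value outside 2^C irrelevant, set to 0).\<close>
definition mu_star :: "nat \<Rightarrow> nat \<Rightarrow> (nat \<Rightarrow> nat \<Rightarrow> real) \<Rightarrow> (nat \<Rightarrow> real) \<Rightarrow> nat \<Rightarrow> nat set \<Rightarrow> real" where
  "mu_star n N x alpha q X =
     (if X = crit n then 1
      else if X \<subset> crit n \<and> n - q \<le> card X then nuQ n N x alpha q X
      else if X \<subset> crit n then
        Min ((nuQ n N x alpha q) ` {Y. X \<subset> Y \<and> Y \<subset> crit n \<and> n - q \<le> card Y})
      else 0)"

end

theory Submission
  imports Defs
begin

(* The Sugeno integral is controlled by single sets: S_mu(x^(k)) <= max(mu A, gamma_{k,A})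
   for every A, and S_mu(x^(k)) <= mu A as soon as gamma_{k,A} < S_mu(x^(k)).  For a
   q-minitive capacity with error d these two facts yield, for every example i, a set A with
   |A| >= n-q and nabla_{i,A} <= d, so nabla_q bounds the error from below.  Conversely a
   capacity with error at most nabla_q satisfies mu A >= alpha^(k) - nabla_q whenever
   gamma_{k,A} < alpha^(k) - nabla_q, i.e. mu >= nu_q on proper subsets of C; mu_* is the least
   q-minitive capacity with this property, and the definition of nabla_q is exactly what makes
   its error equal to nabla_q. *)

lemma finite_crit [simp]: "finite (crit n)"
  by (simp add: crit_def)

lemma card_crit [simp]: "card (crit n) = n"
  by (simp add: crit_def)

(* X itself is admitted, unlike in the last case of mu_star: this gives a single formula for
   mu_star on all proper subsets of C (lemma mu_s_eq_Min). *)
definition large_proper_supersets :: "nat \<Rightarrow> nat \<Rightarrow> nat set \<Rightarrow> nat set set" where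
  "large_proper_supersets n q X = {Y. X \<subseteq> Y \<and> Y \<subset> crit n \<and> n - q \<le> card Y}"

lemma finite_large_proper_supersets [simp]: "finite (large_proper_supersets n q X)"
  unfolding large_proper_supersets_def by (rule finite_subset[of _ "Pow (crit n)"]) auto

lemma large_proper_supersets_nonempty:
  assumes "X \<subset> crit n" and "1 \<le> q"
  shows "large_proper_supersets n q X \<noteq> {}"
proof -
  have "card X < n"
    using assms(1) by (metis card_crit finite_crit psubset_card_mono)
  then obtain Y where Y: "X \<subseteq> Y" "Y \<subseteq> crit n" "card Y = max (card X) (n - q)"
    using exists_subset_between[of X "max (card X) (n - q)" "crit n"] assms(1) by auto
  then have "Y \<noteq> crit n"
    using \<open>card X < n\<close> assms(2) by auto
  with Y have "Y \<in> large_proper_supersets n q X"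
    unfolding large_proper_supersets_def by auto
  then show ?thesis
    by blast
qed

subsection \<open>The quantities gamma and the Sugeno integral\<close>

lemma gam_ge: "j \<in> crit n - A \<Longrightarrow> x k j \<le> gam n x k A"
  unfolding gam_def by (intro Max_ge) auto

lemma gam_le_iff:
  "crit n - A \<noteq> {} \<Longrightarrow> gam n x k A \<le> u \<longleftrightarrow> (\<forall>j \<in> crit n - A. x k j \<le> u)"
  unfolding gam_def by simp

lemma gam_less_iff:
  "crit n - A \<noteq> {} \<Longrightarrow> gam n x k A < u \<longleftrightarrow> (\<forall>j \<in> crit n - A. x k j < u)"
  unfolding gam_def by simp

lemma gam_antimono:
  assumes "A \<subseteq> B" and "crit n - B \<noteq> {}"
  shows "gam n x k B \<le> gam n x k A"
  using assms by (auto simp: gam_le_iff intro: gam_ge)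

lemma minOn_le: "finite B \<Longrightarrow> j \<in> B \<Longrightarrow> minOn y B \<le> y j"
  unfolding minOn_def by auto

lemma minOn_ge: "finite B \<Longrightarrow> (\<And>j. j \<in> B \<Longrightarrow> v \<le> y j) \<Longrightarrow> v \<le> 1 \<Longrightarrow> v \<le> minOn y B"
  unfolding minOn_def by auto

lemma minOn_gt: "finite B \<Longrightarrow> (\<And>j. j \<in> B \<Longrightarrow> v < y j) \<Longrightarrow> v < 1 \<Longrightarrow> v < minOn y B"
  unfolding minOn_def by auto

lemma sugeno_ge:
  assumes "B \<subseteq> crit n" and "v \<le> minOn y B" and "v \<le> mu B"
  shows "v \<le> sugeno n mu y"
proof -
  have "min (minOn y B) (mu B) \<le> sugeno n mu y"
    unfolding sugeno_def using assms(1) by (intro Max_ge) auto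
  with assms show ?thesis
    by linarith
qed

lemma sugeno_le_iff:
  "sugeno n mu y \<le> u \<longleftrightarrow> (\<forall>B \<subseteq> crit n. min (minOn y B) (mu B) \<le> u)"
  unfolding sugeno_def by (subst Max_le_iff) auto

lemma sugeno_attained: "\<exists>B \<subseteq> crit n. sugeno n mu y = min (minOn y B) (mu B)"
proof -
  have "sugeno n mu y \<in> (\<lambda>A. min (minOn y A) (mu A)) ` Pow (crit n)"
    unfolding sugeno_def by (intro Max_in) auto
  then show ?thesis
    by auto
qed

lemma sugeno_nonneg: "0 \<le> mu {} \<Longrightarrow> 0 \<le> sugeno n mu y"
  by (rule sugeno_ge[of "{}"]) (auto simp: minOn_def)

lemma capacity_mono: "is_capacity n mu \<Longrightarrow> X \<subseteq> Y \<Longrightarrow> Y \<subseteq> crit n \<Longrightarrow> mu X \<le> mu Y"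
  unfolding is_capacity_def by blast

lemma capacity_range: "is_capacity n mu \<Longrightarrow> X \<subseteq> crit n \<Longrightarrow> 0 \<le> mu X \<and> mu X \<le> 1"
  unfolding is_capacity_def by blast

lemma capacity_crit: "is_capacity n mu \<Longrightarrow> mu (crit n) = 1"
  unfolding is_capacity_def by blast

lemma sugeno_le_max_capacity_gam:
  assumes "is_capacity n mu" and "A \<subseteq> crit n"
  shows "sugeno n mu (x k) \<le> max (mu A) (gam n x k A)"
  unfolding sugeno_le_iff
proof (intro allI impI)
  fix B assume B: "B \<subseteq> crit n"
  show "min (minOn (x k) B) (mu B) \<le> max (mu A) (gam n x k A)"
  proof (cases "B \<subseteq> A")
    case True
    with assms have "mu B \<le> mu A"
      by (simp add: capacity_mono)
    then show ?thesis
      by linarith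
  next
    case False
    then obtain j where "j \<in> B" "j \<notin> A"
      by blast
    with B have "minOn (x k) B \<le> x k j" "x k j \<le> gam n x k A"
      by (auto intro: minOn_le gam_ge finite_subset[OF _ finite_crit])
    then show ?thesis
      by linarith
  qed
qed

lemma sugeno_le_capacity_if_gam_less:
  assumes "is_capacity n mu" and "A \<subseteq> crit n" and "gam n x k A < sugeno n mu (x k)"
  shows "sugeno n mu (x k) \<le> mu A"
proof -
  obtain B where B: "B \<subseteq> crit n" "sugeno n mu (x k) = min (minOn (x k) B) (mu B)"
    using sugeno_attained by blast
  have "B \<subseteq> A"
  proof
    fix j assume "j \<in> B"
    show "j \<in> A"
    proof (rule ccontr)
      assume "j \<notin> A"
      with \<open>j \<in> B\<close> B(1) have "minOn (x k) B \<le> x k j" "x k j \<le> gam n x k A"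
        by (auto intro: minOn_le gam_ge finite_subset[OF _ finite_crit])
      with assms(3) B(2) show False
        by linarith
    qed
  qed
  with assms(1,2) have "mu B \<le> mu A"
    by (simp add: capacity_mono)
  with B(2) show ?thesis
    by linarith
qed

subsection \<open>q-minitive capacities\<close>

lemma q_minitive_attained:
  assumes cap: "is_capacity n mu" and qm: "q_minitive n q mu"
    and X: "X \<subseteq> crit n" and less: "mu X < 1"
  obtains Y where "Y \<in> large_proper_supersets n q X" and "mu Y = mu X"
proof (cases "n - q \<le> card X")
  case True
  with X less capacity_crit[OF cap] show ?thesis
    by (intro that[of X]) (auto simp: large_proper_supersets_def)
next
  case False
  define Ys where "Ys = {Y. X \<subset> Y \<and> Y \<subseteq> crit n \<and> n - q \<le> card Y}"
  have min: "mu X = Min (mu ` Ys)"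
    using qm X False unfolding q_minitive_def Ys_def by auto
  have "crit n \<in> Ys"
    using X False unfolding Ys_def by auto
  moreover have "finite Ys"
    unfolding Ys_def by (rule finite_subset[of _ "Pow (crit n)"]) auto
  ultimately have "Min (mu ` Ys) \<in> mu ` Ys"
    by (intro Min_in) auto
  with min obtain Y where Y: "Y \<in> Ys" "mu Y = mu X"
    by auto
  with less capacity_crit[OF cap] have "Y \<noteq> crit n"
    by auto
  with Y show ?thesis
    by (intro that[of Y]) (auto simp: Ys_def large_proper_supersets_def)
qed

lemma large_set_below_sugeno:
  assumes cap: "is_capacity n mu" and qm: "q_minitive n q mu"
    and less: "sugeno n mu (x k) < 1"
  obtains A where "A \<subset> crit n" and "n - q \<le> card A"
    and "mu A \<le> sugeno n mu (x k)" and "gam n x k A \<le> sugeno n mu (x k)"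
proof -
  define t where "t = sugeno n mu (x k)"
  define A0 where "A0 = {j \<in> crit n. t < x k j}"
  have A0: "A0 \<subseteq> crit n" "finite A0"
    unfolding A0_def by auto
  have "t < minOn (x k) A0"
    using A0 less by (intro minOn_gt) (auto simp: A0_def t_def)
  moreover have "min (minOn (x k) A0) (mu A0) \<le> t"
    unfolding t_def by (rule sugeno_ge[OF A0(1)]) simp_all
  ultimately have mu_A0: "mu A0 \<le> t"
    by linarith
  with less have "mu A0 < 1"
    unfolding t_def by linarith
  with cap qm A0(1) obtain A where A: "A \<in> large_proper_supersets n q A0" "mu A = mu A0"
    by (rule q_minitive_attained)
  then have A_sub: "A0 \<subseteq> A" "A \<subset> crit n" "n - q \<le> card A"
    unfolding large_proper_supersets_def by auto
  then have "crit n - A \<noteq> {}"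
    by blast
  with A_sub(1) have "gam n x k A \<le> t"
    by (auto simp: gam_le_iff A0_def)
  with A A_sub mu_A0 show ?thesis
    unfolding t_def by (intro that) auto
qed

subsection \<open>The quantities nabla and nu\<close>

lemma pos_le_iff [simp]: "pos t \<le> d \<longleftrightarrow> t \<le> d \<and> 0 \<le> d"
  unfolding pos_def by auto

lemma sig_le_iff:
  "0 \<le> d \<Longrightarrow> sig a g b \<le> d \<longleftrightarrow> (g < b - d \<longrightarrow> b - d \<le> a + d)"
  unfolding sig_def pos_def by (cases "g < b - d") (auto simp: min_le_iff_disj)

lemma eps_le_if_sig_le:
  assumes "0 \<le> a" and "0 \<le> d" and "sig a g b \<le> d"
  shows "eps g (max (b - d) 0) \<le> a + d"
  using assms unfolding sig_le_iff[OF assms(2)] eps_def by auto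

lemma nablaIA_le_iff:
  assumes "1 \<le> N"
  shows "nablaIA n N x alpha i A \<le> d \<longleftrightarrow>
    pos (gam n x i A - alpha i) \<le> d \<and> (\<forall>l \<in> {1..N}. sig (alpha i) (gam n x l A) (alpha l) \<le> d)"
  unfolding nablaIA_def using assms by auto

lemma nablaIA_nonneg: "0 \<le> nablaIA n N x alpha i A"
  unfolding nablaIA_def pos_def by auto

lemma admissible_sets_eq_large_proper_supersets: "{A. A \<subset> crit n \<and> n - q \<le> card A} = large_proper_supersets n q {}"
  unfolding large_proper_supersets_def by auto

lemma nablaI_le: "A \<subset> crit n \<Longrightarrow> n - q \<le> card A \<Longrightarrow> nablaI n N x alpha q i \<le> nablaIA n N x alpha i A"
  unfolding nablaI_def admissible_sets_eq_large_proper_supersets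
  by (rule Min_le[OF finite_imageI[OF finite_large_proper_supersets]])
    (auto simp: large_proper_supersets_def)

lemma large_proper_supersets_empty_nonempty:
  assumes "q \<in> {1..n}"
  shows "large_proper_supersets n q {} \<noteq> {}"
proof -
  have "{} \<subset> crit n"
    using assms by (auto simp: crit_def)
  with assms show ?thesis
    by (intro large_proper_supersets_nonempty) auto
qed

lemma nablaI_attained:
  assumes "q \<in> {1..n}"
  obtains A where "A \<subset> crit n" and "n - q \<le> card A"
    and "nablaIA n N x alpha i A = nablaI n N x alpha q i"
proof -
  have "large_proper_supersets n q {} \<noteq> {}"
    using assms by (rule large_proper_supersets_empty_nonempty)
  then have "nablaI n N x alpha q i \<in> (\<lambda>A. nablaIA n N x alpha i A) ` large_proper_supersets n q {}"
    unfolding nablaI_def admissible_sets_eq_large_proper_supersets by (intro Min_in) auto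
  then obtain A where "A \<in> large_proper_supersets n q {}"
    and "nablaI n N x alpha q i = nablaIA n N x alpha i A"
    by blast
  then show ?thesis
    by (intro that) (auto simp: large_proper_supersets_def)
qed

lemma nablaI_le_nablaQ: "i \<in> {1..N} \<Longrightarrow> nablaI n N x alpha q i \<le> nablaQ n N x alpha q"
  unfolding nablaQ_def by (intro Max_ge) auto

lemma nablaQ_le_iff:
  "1 \<le> N \<Longrightarrow> nablaQ n N x alpha q \<le> d \<longleftrightarrow> (\<forall>i \<in> {1..N}. nablaI n N x alpha q i \<le> d)"
  unfolding nablaQ_def by auto

lemma nuQ_ge:
  "k \<in> {1..N} \<Longrightarrow> eps (gam n x k A) (max (alpha k - nablaQ n N x alpha q) 0) \<le> nuQ n N x alpha q A"
  unfolding nuQ_def by (intro Max_ge) auto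

lemma nuQ_le_iff:
  "1 \<le> N \<Longrightarrow> nuQ n N x alpha q A \<le> u \<longleftrightarrow>
    (\<forall>k \<in> {1..N}. eps (gam n x k A) (max (alpha k - nablaQ n N x alpha q) 0) \<le> u)"
  unfolding nuQ_def by auto

lemma err_ge: "k \<in> {1..N} \<Longrightarrow> \<bar>sugeno n mu (x k) - alpha k\<bar> \<le> err n N x alpha mu"
  unfolding err_def by (intro Max_ge) auto

lemma err_nonneg: "1 \<le> N \<Longrightarrow> 0 \<le> err n N x alpha mu"
  using err_ge[of 1 N n mu x alpha] by force

lemma err_le_iff:
  "1 \<le> N \<Longrightarrow> err n N x alpha mu \<le> d \<longleftrightarrow> (\<forall>k \<in> {1..N}. \<bar>sugeno n mu (x k) - alpha k\<bar> \<le> d)"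
  unfolding err_def by auto

lemma mu_star_crit [simp]: "mu_star n N x alpha q (crit n) = 1"
  unfolding mu_star_def by simp

lemma mu_star_large:
  "Y \<subset> crit n \<Longrightarrow> n - q \<le> card Y \<Longrightarrow> mu_star n N x alpha q Y = nuQ n N x alpha q Y"
  unfolding mu_star_def by auto

subsection \<open>The least q-minitive capacity of minimal error\<close>

locale sugeno_training_data =
  fixes n N q :: nat and x :: "nat \<Rightarrow> nat \<Rightarrow> real" and alpha :: "nat \<Rightarrow> real"
  assumes N_pos: "1 \<le> N"
    and x_range: "\<And>k i. k \<in> {1..N} \<Longrightarrow> i \<in> crit n \<Longrightarrow> 0 \<le> x k i \<and> x k i \<le> 1"
    and alpha_range: "\<And>k. k \<in> {1..N} \<Longrightarrow> 0 \<le> alpha k \<and> alpha k \<le> 1"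
    and q_range: "q \<in> {1..n}"
begin

abbreviation nabla_q :: real where "nabla_q \<equiv> nablaQ n N x alpha q"
abbreviation nu_q :: "nat set \<Rightarrow> real" where "nu_q \<equiv> nuQ n N x alpha q"
abbreviation mu_s :: "nat set \<Rightarrow> real" where "mu_s \<equiv> mu_star n N x alpha q"

lemma nablaIA_le_if_one_le_alpha_plus:
  assumes i: "i \<in> {1..N}" and A: "A \<subset> crit n" and d: "0 \<le> d" "1 \<le> alpha i + d"
  shows "nablaIA n N x alpha i A \<le> d"
proof -
  from A have "gam n x i A \<le> 1"
    using x_range[OF i] by (subst gam_le_iff) auto
  moreover have "alpha l - d \<le> alpha i + d" if "l \<in> {1..N}" for l
    using alpha_range[OF that] d by linarith
  ultimately show ?thesis
    using d by (auto simp: nablaIA_le_iff[OF N_pos] sig_le_iff)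
qed

lemma nablaIA_le_err:
  assumes cap: "is_capacity n mu" and i: "i \<in> {1..N}" and A: "A \<subseteq> crit n"
    and mu_A: "mu A \<le> sugeno n mu (x i)" and gam_A: "gam n x i A \<le> sugeno n mu (x i)"
  shows "nablaIA n N x alpha i A \<le> err n N x alpha mu"
proof -
  define d where "d = err n N x alpha mu"
  have err_k: "\<bar>sugeno n mu (x k) - alpha k\<bar> \<le> d" if "k \<in> {1..N}" for k
    using err_ge[OF that] unfolding d_def .
  have S_i: "sugeno n mu (x i) \<le> alpha i + d"
    using err_k[OF i] by linarith
  have "alpha l - d \<le> alpha i + d" if l: "l \<in> {1..N}" and "gam n x l A < alpha l - d" for l
  proof -
    have "alpha l - d \<le> sugeno n mu (x l)"
      using err_k[OF l] by linarith
    moreover have "sugeno n mu (x l) \<le> mu A"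
      using \<open>gam n x l A < alpha l - d\<close> calculation
      by (intro sugeno_le_capacity_if_gam_less[OF cap A]) auto
    ultimately show ?thesis
      using mu_A S_i by linarith
  qed
  moreover have "0 \<le> d"
    unfolding d_def using N_pos by (rule err_nonneg)
  ultimately show ?thesis
    using gam_A S_i unfolding d_def[symmetric]
    by (auto simp: nablaIA_le_iff[OF N_pos] sig_le_iff)
qed

lemma nablaI_le_err:
  assumes cap: "is_capacity n mu" and qm: "q_minitive n q mu" and i: "i \<in> {1..N}"
  shows "nablaI n N x alpha q i \<le> err n N x alpha mu"
proof -
  obtain A where A: "A \<subset> crit n" "n - q \<le> card A" "nablaIA n N x alpha i A \<le> err n N x alpha mu"
  proof (cases "1 \<le> alpha i + err n N x alpha mu")
    case True
    obtain A where "A \<in> large_proper_supersets n q {}"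
      using large_proper_supersets_empty_nonempty[OF q_range] by blast
    then have "A \<subset> crit n" "n - q \<le> card A"
      by (auto simp: large_proper_supersets_def)
    with True show ?thesis
      using err_nonneg[OF N_pos] by (intro that nablaIA_le_if_one_le_alpha_plus[OF i]) auto
  next
    case False
    then have "sugeno n mu (x i) < 1"
      using err_ge[OF i, of n mu x alpha] by linarith
    with cap qm obtain A where "A \<subset> crit n" "n - q \<le> card A"
        "mu A \<le> sugeno n mu (x i)" "gam n x i A \<le> sugeno n mu (x i)"
      by (rule large_set_below_sugeno)
    then show ?thesis
      by (intro that nablaIA_le_err[OF cap i]) auto
  qed
  then show ?thesis
    using nablaI_le[of A n q N x alpha i] by linarith
qed

lemma nablaQ_le_err:
  "is_capacity n mu \<Longrightarrow> q_minitive n q mu \<Longrightarrow> nabla_q \<le> err n N x alpha mu"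
  by (simp add: nablaQ_le_iff[OF N_pos] nablaI_le_err)

lemma nabla_q_nonneg: "0 \<le> nabla_q"
proof -
  obtain A where "nablaIA n N x alpha 1 A = nablaI n N x alpha q 1"
    using nablaI_attained[OF q_range] by metis
  then show ?thesis
    using nablaIA_nonneg[of n N x alpha 1 A] nablaI_le_nablaQ[of 1 N n x alpha q] N_pos by simp
qed

lemma nu_q_nonneg: "0 \<le> nu_q A"
  using nuQ_ge[of 1 N n x A alpha q] N_pos unfolding eps_def by (auto split: if_splits)

lemma nu_q_le_1: "nu_q A \<le> 1"
  unfolding nuQ_le_iff[OF N_pos]
proof
  fix k assume "k \<in> {1..N}"
  then show "eps (gam n x k A) (max (alpha k - nabla_q) 0) \<le> 1"
    using alpha_range[of k] nabla_q_nonneg by (auto simp: eps_def)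
qed

lemma nu_q_mono:
  assumes "A \<subseteq> B" and "crit n - B \<noteq> {}"
  shows "nu_q A \<le> nu_q B"
  unfolding nuQ_le_iff[OF N_pos]
proof
  fix k assume k: "k \<in> {1..N}"
  have "gam n x k B \<le> gam n x k A"
    using assms by (rule gam_antimono)
  then have "eps (gam n x k A) (max (alpha k - nabla_q) 0) \<le> eps (gam n x k B) (max (alpha k - nabla_q) 0)"
    unfolding eps_def by auto
  also have "\<dots> \<le> nu_q B"
    using k by (rule nuQ_ge)
  finally show "eps (gam n x k A) (max (alpha k - nabla_q) 0) \<le> nu_q B" .
qed

lemma mu_s_eq_Min:
  assumes X: "X \<subset> crit n"
  shows "mu_s X = Min (nu_q ` large_proper_supersets n q X)"
proof (cases "n - q \<le> card X")
  case True
  with X have "X \<in> large_proper_supersets n q X"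
    by (auto simp: large_proper_supersets_def)
  moreover have "nu_q X \<le> nu_q Y" if "Y \<in> large_proper_supersets n q X" for Y
    using that by (intro nu_q_mono) (auto simp: large_proper_supersets_def)
  ultimately have "Min (nu_q ` large_proper_supersets n q X) = nu_q X"
    by (intro Min_eqI) auto
  with X True show ?thesis
    by (simp add: mu_star_large)
next
  case False
  then have "large_proper_supersets n q X = {Y. X \<subset> Y \<and> Y \<subset> crit n \<and> n - q \<le> card Y}"
    by (auto simp: large_proper_supersets_def)
  with X False show ?thesis
    unfolding mu_star_def by auto
qed

lemma mu_s_le:
  assumes Y: "Y \<in> large_proper_supersets n q X"
  shows "mu_s X \<le> nu_q Y"
proof -
  from Y have "X \<subset> crit n"
    by (auto simp: large_proper_supersets_def)
  with Y show ?thesis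
    unfolding mu_s_eq_Min[OF \<open>X \<subset> crit n\<close>] by (intro Min_le) auto
qed

lemma mu_s_ge:
  assumes "X \<subset> crit n" and "\<And>Y. Y \<in> large_proper_supersets n q X \<Longrightarrow> v \<le> nu_q Y"
  shows "v \<le> mu_s X"
proof -
  have "large_proper_supersets n q X \<noteq> {}"
    using large_proper_supersets_nonempty[OF assms(1)] q_range by simp
  with assms(2) show ?thesis
    unfolding mu_s_eq_Min[OF assms(1)] by simp
qed

lemma mu_s_range: "X \<subseteq> crit n \<Longrightarrow> 0 \<le> mu_s X \<and> mu_s X \<le> 1"
proof (cases "X = crit n")
  case False
  assume "X \<subseteq> crit n"
  with False have X: "X \<subset> crit n"
    by blast
  then obtain Y where "Y \<in> large_proper_supersets n q X"
    using large_proper_supersets_nonempty[OF X] q_range by auto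
  then have "mu_s X \<le> nu_q Y"
    by (rule mu_s_le)
  with nu_q_le_1[of Y] mu_s_ge[OF X nu_q_nonneg] show ?thesis
    by linarith
qed simp

lemma mu_s_mono:
  assumes "X \<subseteq> Y" and "Y \<subseteq> crit n"
  shows "mu_s X \<le> mu_s Y"
proof (cases "Y = crit n")
  case True
  with assms show ?thesis
    using mu_s_range[of X] by simp
next
  case False
  with assms have "Y \<subset> crit n"
    by blast
  then show ?thesis
  proof (rule mu_s_ge)
    fix Z assume "Z \<in> large_proper_supersets n q Y"
    with assms(1) have "Z \<in> large_proper_supersets n q X"
      by (auto simp: large_proper_supersets_def)
    then show "mu_s X \<le> nu_q Z"
      by (rule mu_s_le)
  qed
qed

lemma mu_s_capacity: "mu_s {} = 0 \<Longrightarrow> is_capacity n mu_s"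
  unfolding is_capacity_def using mu_s_range mu_s_mono by auto

lemma mu_s_q_minitive: "q_minitive n q mu_s"
  unfolding q_minitive_def
proof (intro allI impI, elim conjE)
  fix X assume X: "X \<subseteq> crit n" and small: "card X < n - q"
  define Ys where "Ys = {Y. X \<subset> Y \<and> Y \<subseteq> crit n \<and> n - q \<le> card Y}"
  have "X \<subset> crit n"
    using X small by auto
  then have "Min (nu_q ` large_proper_supersets n q X) \<in> nu_q ` large_proper_supersets n q X"
    using large_proper_supersets_nonempty q_range by (intro Min_in) auto
  then obtain Y where Y: "Y \<in> large_proper_supersets n q X" "mu_s X = nu_q Y"
    using mu_s_eq_Min[OF \<open>X \<subset> crit n\<close>] by auto
  with small have "Y \<in> Ys" "mu_s Y = nu_q Y"
    by (auto simp: Ys_def large_proper_supersets_def mu_star_large)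
  with Y(2) have "mu_s X \<in> mu_s ` Ys"
    by (metis image_eqI)
  moreover have "mu_s X \<le> mu_s Z" if "Z \<in> Ys" for Z
    using that by (intro mu_s_mono) (auto simp: Ys_def)
  moreover have "finite Ys"
    unfolding Ys_def by (rule finite_subset[of _ "Pow (crit n)"]) auto
  ultimately have "Min (mu_s ` Ys) = mu_s X"
    by (intro Min_eqI) auto
  then show "mu_s X = Min (mu_s ` Ys)" ..
qed

lemma mu_s_empty:
  assumes "A \<subseteq> crit n" and "card A = n - q" and "nu_q A = 0"
  shows "mu_s {} = 0"
proof -
  have "card A < n"
    using assms(2) q_range by auto
  with assms(1) have "A \<in> large_proper_supersets n q {}"
    using assms(2) by (auto simp: large_proper_supersets_def)
  then have "mu_s {} \<le> 0"
    using mu_s_le assms(3) by fastforce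
  with mu_s_range[of "{}"] show ?thesis
    by simp
qed

lemma sugeno_mu_s_ge:
  assumes k: "k \<in> {1..N}"
  shows "alpha k - nabla_q \<le> sugeno n mu_s (x k)"
proof (cases "alpha k - nabla_q \<le> 0")
  case True
  then show ?thesis
    using sugeno_nonneg[of mu_s n "x k"] mu_s_range[of "{}"] by simp
next
  case False
  define b where "b = alpha k - nabla_q"
  from False have max_b: "max (alpha k - nabla_q) 0 = b"
    unfolding b_def by simp
  define B where "B = {j \<in> crit n. b \<le> x k j}"
  have "b \<le> 1"
    using alpha_range[OF k] nabla_q_nonneg unfolding b_def by simp
  have B: "B \<subseteq> crit n" "finite B"
    unfolding B_def by auto
  have "b \<le> minOn (x k) B"
    using B \<open>b \<le> 1\<close> by (intro minOn_ge) (auto simp: B_def)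
  moreover have "b \<le> mu_s B"
  proof (cases "B = crit n")
    case True
    with \<open>b \<le> 1\<close> show ?thesis
      by simp
  next
    case False
    with B have "B \<subset> crit n" "crit n - B \<noteq> {}"
      by auto
    then have gam_B: "gam n x k B < b"
      by (auto simp: gam_less_iff B_def)
    show ?thesis
    proof (rule mu_s_ge[OF \<open>B \<subset> crit n\<close>])
      fix Y assume "Y \<in> large_proper_supersets n q B"
      then have "B \<subseteq> Y" "crit n - Y \<noteq> {}"
        by (auto simp: large_proper_supersets_def)
      then have "gam n x k Y < b"
        using gam_antimono[of B Y n x k] gam_B by linarith
      then have "eps (gam n x k Y) (max (alpha k - nabla_q) 0) = b"
        unfolding max_b eps_def by simp
      then show "b \<le> nu_q Y"
        using nuQ_ge[OF k, of n x Y alpha q] by simp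
    qed
  qed
  ultimately show ?thesis
    using sugeno_ge[OF B(1)] unfolding b_def by blast
qed

lemma sugeno_mu_s_le:
  assumes cap: "is_capacity n mu_s" and k: "k \<in> {1..N}"
  shows "sugeno n mu_s (x k) \<le> alpha k + nabla_q"
proof -
  obtain A where A: "A \<subset> crit n" "n - q \<le> card A"
    and opt: "nablaIA n N x alpha k A = nablaI n N x alpha q k"
    using nablaI_attained[OF q_range] by metis
  from opt have "nablaIA n N x alpha k A \<le> nabla_q"
    using nablaI_le_nablaQ[OF k] by simp
  then have gam_A: "gam n x k A \<le> alpha k + nabla_q"
    and sig_A: "\<And>l. l \<in> {1..N} \<Longrightarrow> sig (alpha k) (gam n x l A) (alpha l) \<le> nabla_q"
    by (auto simp: nablaIA_le_iff[OF N_pos])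
  have "nu_q A \<le> alpha k + nabla_q"
    unfolding nuQ_le_iff[OF N_pos]
  proof
    fix l assume "l \<in> {1..N}"
    then show "eps (gam n x l A) (max (alpha l - nabla_q) 0) \<le> alpha k + nabla_q"
      using alpha_range[OF k] nabla_q_nonneg sig_A by (intro eps_le_if_sig_le) auto
  qed
  with A have "mu_s A \<le> alpha k + nabla_q"
    by (simp add: mu_star_large)
  with gam_A show ?thesis
    using sugeno_le_max_capacity_gam[OF cap, of A x k] A(1) by auto
qed

lemma err_mu_s:
  assumes "mu_s {} = 0"
  shows "err n N x alpha mu_s = nabla_q"
proof (rule antisym)
  have cap: "is_capacity n mu_s"
    using assms by (rule mu_s_capacity)
  show "err n N x alpha mu_s \<le> nabla_q"
    unfolding err_le_iff[OF N_pos]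
  proof
    fix k assume "k \<in> {1..N}"
    then show "\<bar>sugeno n mu_s (x k) - alpha k\<bar> \<le> nabla_q"
      using sugeno_mu_s_ge sugeno_mu_s_le[OF cap] by (force simp: abs_le_iff)
  qed
  show "nabla_q \<le> err n N x alpha mu_s"
    using cap mu_s_q_minitive by (rule nablaQ_le_err)
qed

lemma nu_q_le_capacity:
  assumes cap: "is_capacity n mu" and err: "err n N x alpha mu \<le> nabla_q"
    and Y: "Y \<subseteq> crit n"
  shows "nu_q Y \<le> mu Y"
  unfolding nuQ_le_iff[OF N_pos]
proof
  fix k assume k: "k \<in> {1..N}"
  have "alpha k - nabla_q \<le> mu Y" if gam_Y: "gam n x k Y < alpha k - nabla_q"
  proof -
    have "alpha k - nabla_q \<le> sugeno n mu (x k)"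
      using err_ge[OF k, of n mu x alpha] err by linarith
    moreover from calculation gam_Y have "sugeno n mu (x k) \<le> mu Y"
      by (intro sugeno_le_capacity_if_gam_less[OF cap Y]) linarith
    ultimately show ?thesis
      by linarith
  qed
  then show "eps (gam n x k Y) (max (alpha k - nabla_q) 0) \<le> mu Y"
    using capacity_range[OF cap Y] unfolding eps_def by (cases "alpha k - nabla_q \<le> 0") auto
qed

lemma mu_s_le_capacity:
  assumes cap: "is_capacity n mu" and qm: "q_minitive n q mu"
    and err: "err n N x alpha mu \<le> nabla_q" and X: "X \<subseteq> crit n"
  shows "mu_s X \<le> mu X"
proof (cases "mu X < 1")
  case True
  with cap qm X obtain Y where Y: "Y \<in> large_proper_supersets n q X" "mu Y = mu X"
    by (rule q_minitive_attained)
  then have "mu_s X \<le> nu_q Y"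
    by (intro mu_s_le)
  also have "\<dots> \<le> mu Y"
    using Y(1) by (intro nu_q_le_capacity[OF cap err]) (auto simp: large_proper_supersets_def)
  finally show ?thesis
    using Y(2) by simp
next
  case False
  with mu_s_range[OF X] show ?thesis
    by linarith
qed

end

theorem corollary3:
  fixes n N q :: nat and x :: "nat \<Rightarrow> nat \<Rightarrow> real" and alpha :: "nat \<Rightarrow> real"
  assumes "1 \<le> N"
    and "\<And>k i. k \<in> {1..N} \<Longrightarrow> i \<in> crit n \<Longrightarrow> 0 \<le> x k i \<and> x k i \<le> 1"
    and "\<And>k. k \<in> {1..N} \<Longrightarrow> 0 \<le> alpha k \<and> alpha k \<le> 1"
    and "q \<in> {1..n}"
    and "\<exists>A. A \<subseteq> crit n \<and> card A = n - q \<and> nuQ n N x alpha q A = 0"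
  shows "is_capacity n (mu_star n N x alpha q)
       \<and> q_minitive n q (mu_star n N x alpha q)
       \<and> err n N x alpha (mu_star n N x alpha q) = nablaQ n N x alpha q
       \<and> (\<forall>mu. is_capacity n mu \<and> q_minitive n q mu
              \<and> err n N x alpha mu = nablaQ n N x alpha q
              \<longrightarrow> (\<forall>X. X \<subseteq> crit n \<longrightarrow> mu_star n N x alpha q X \<le> mu X))"
proof -
  interpret sugeno_training_data n N q x alpha
    using assms(1-4) by unfold_locales
  obtain A where A: "A \<subseteq> crit n" "card A = n - q" "nu_q A = 0"
    using assms(5) by blast
  have "mu_s {} = 0"
    by (rule mu_s_empty[OF A])
  then show ?thesis
    using mu_s_capacity mu_s_q_minitive err_mu_s mu_s_le_capacity by auto
qed

end
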